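(* Assume $n>3t+2d$. In any execution of Algorithm 1, if a correct process $p_i$ mbrb-broadcasts $(m,sn)$, then at least $$c-d-\left\lfloor\frac{d\,\lfloor\frac{n+t}{2}\rfloor}{c-d-\lfloor\frac{n+t}{2}\rfloor}\right\rfloor$$ correct processes mbrb-deliver $(m,sn,i)$ at most two communication steps after the mbrb-broadcast.
   Context: System model. There are $n$ asynchronous processes $p_1,\dots,p_n$ with distinct known identities. Up to $t$ are Byzantine (arbitrary behavior); the rest are correct; $c$ is the number of correct processes in the execution, $n-t\le c\le n$. The network is fully connected, asynchronous, never corrupts/duplicates/creates messages; "broadcast $M$" sends $M$ to all $n$ processes; a message adversary may suppress, per broadcast by a correct process, up to $d$ ($0\le d<c$) copies addressed to correct processes, all other copies among correct processes being received. Signatures are unforgeable and public keys are known. Time is measured in communication steps: local computation takes zero time and every imp-message has the same transfer delay of one step. Algorithm 1 (code for $p_i$). Each process stores, for each triplet $(m,sn,j)$, a set of saved valid signatures of that triplet, at most one per signer. On $\mathrm{mbrb\_broadcast}(m,sn)$: $p_i$ saves its own signature of $(m,sn,i)$ and broadcasts $\mathrm{BUNDLE}(m,sn,i,S)$, $S$ the saved signatures for $(m,sn,i)$. On receiving $\mathrm{BUNDLE}(m,sn,j,sigs)$: if $p_i$ has not already mbrb-delivered some $(-,sn,j)$ and $sigs$ contains a valid signature of $(m,sn,j)$ by $p_j$, then: (1) save all new valid signatures of $(m,sn,j)$ in $sigs$; (2) if $p_i$ has not yet signed any $(-,sn,j)$, save its own signature of $(m,sn,j)$ and broadcast $\mathrm{BUNDLE}(m,sn,j,\text{all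 saved signatures for }(m,sn,j))$; (3) if strictly more than $\frac{n+t}{2}$ signatures for $(m,sn,j)$ are saved, broadcast $\mathrm{BUNDLE}(m,sn,j,\text{all saved signatures})$ and mbrb-deliver $(m,sn,j)$. A correct process never uses the same sequence number twice. *)

theory Defs
  imports Complex_Main
begin

text \<open>Model of Algorithm 1. Processes are 0..n-1 (p_1..p_n shifted). A signature of a
triplet x = (m, sn, j) is represented abstractly by its signer; a BUNDLE(m,sn,j,sigs) is the
tuple (m, sn, j, S) with S the set of signers whose signatures of (m,sn,j) are in sigs
(only signers in 0..n-1 have known public keys, hence valid signatures).\<close>

type_synonym 'm triple = "'m \<times> nat \<times> nat"
type_synonym 'm bndl = "'m \<times> nat \<times> nat \<times> nat set"

record 'm pst =
  saved :: "'m triple \<Rightarrow> nat set"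
  signed_keys :: "(nat \<times> nat) set"
  dlv :: "'m triple set"

record 'm pout =
  bcs :: "'m bndl list"
  sgs :: "'m triple list"
  dls :: "'m triple list"

datatype 'm action = MBcast 'm nat | Recv "'m bndl" | Idle

definition init_st :: "'m pst" where
  "init_st = \<lparr>saved = (\<lambda>_. {}), signed_keys = {}, dlv = {}\<rparr>"

definition no_out :: "'m pout" where
  "no_out = \<lparr>bcs = [], sgs = [], dls = []\<rparr>"

definition bcast_step :: "nat \<Rightarrow> 'm \<Rightarrow> nat \<Rightarrow> 'm pst \<Rightarrow> 'm pst \<times> 'm pout" where
  "bcast_step i m sn s =
    (let x = (m, sn, i);
         s' = s\<lparr>saved := (saved s)(x := saved s x \<union> {i}),
                signed_keys := insert (sn, i) (signed_keys s)\<rparr>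
     in (s', \<lparr>bcs = [(m, sn, i, saved s' x)], sgs = [x], dls = []\<rparr>))"

definition recv_step :: "nat \<Rightarrow> nat \<Rightarrow> nat \<Rightarrow> 'm bndl \<Rightarrow> 'm pst \<Rightarrow> 'm pst \<times> 'm pout" where
  "recv_step n t i b s = (case b of (m, sn, j, S) \<Rightarrow>
     if (\<exists>m'. (m', sn, j) \<in> dlv s) \<or> j \<notin> S \<or> n \<le> j then (s, no_out)
     else (let x = (m, sn, j);
               s1 = s\<lparr>saved := (saved s)(x := saved s x \<union> (S \<inter> {..<n}))\<rparr>;
               (s2, b2, g2) =
                 (if (sn, j) \<in> signed_keys s1 then (s1, [], [])
                  else (let s' = s1\<lparr>saved := (saved s1)(x := saved s1 x \<union> {i}),
                                    signed_keys := insert (sn, j) (signed_keys s1)\<rparr>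
                        in (s', [(m, sn, j, saved s' x)], [x])))
           in if n + t < 2 * card (saved s2 x)
              then (s2\<lparr>dlv := insert x (dlv s2)\<rparr>,
                    \<lparr>bcs = b2 @ [(m, sn, j, saved s2 x)], sgs = g2, dls = [x]\<rparr>)
              else (s2, \<lparr>bcs = b2, sgs = g2, dls = []\<rparr>)))"

definition act_step :: "nat \<Rightarrow> nat \<Rightarrow> nat \<Rightarrow> 'm action \<Rightarrow> 'm pst \<Rightarrow> 'm pst \<times> 'm pout" where
  "act_step n t i a s = (case a of
      MBcast m sn \<Rightarrow> bcast_step i m sn s
    | Recv b \<Rightarrow> recv_step n t i b s
    | Idle \<Rightarrow> (s, no_out))"

text \<open>An execution is an infinite sequence of events E k = (correct process, action),
with time stamps tm k (in communication steps). states n t E k = local states before event k.\<close>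
fun states :: "nat \<Rightarrow> nat \<Rightarrow> (nat \<Rightarrow> nat \<times> 'm action) \<Rightarrow> nat \<Rightarrow> nat \<Rightarrow> 'm pst" where
  "states n t E 0 = (\<lambda>_. init_st)"
| "states n t E (Suc k) =
     (case E k of (p, a) \<Rightarrow> (states n t E k)(p := fst (act_step n t p a (states n t E k p))))"

definition outp :: "nat \<Rightarrow> nat \<Rightarrow> (nat \<Rightarrow> nat \<times> 'm action) \<Rightarrow> nat \<Rightarrow> 'm pout" where
  "outp n t E k = (case E k of (p, a) \<Rightarrow> snd (act_step n t p a (states n t E k p)))"

text \<open>Admissible executions: only correct processes (set C) take steps; time is monotone and
unbounded; sequence numbers are not reused; every received message either was broadcast by a
correct process exactly one step before, or comes from a Byzantine process (which exists) and
contains signatures of correct processes only if these were produced at least two steps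
earlier (one step to reach the Byzantine process, one step to come back); of every broadcast
by a correct process, at most d copies to correct processes are not received one step later.\<close>
definition valid_exec :: "nat \<Rightarrow> nat \<Rightarrow> nat \<Rightarrow> nat set \<Rightarrow> (nat \<Rightarrow> nat \<times> 'm action) \<Rightarrow> (nat \<Rightarrow> nat) \<Rightarrow> bool" where
  "valid_exec n t d C E tm \<longleftrightarrow>
    (\<forall>k. fst (E k) \<in> C) \<and> mono tm \<and> (\<forall>T. \<exists>k. T < tm k) \<and>
    (\<forall>k k' p m m' sn. E k = (p, MBcast m sn) \<and> E k' = (p, MBcast m' sn) \<longrightarrow> k = k') \<and>
    (\<forall>k p b. E k = (p, Recv b) \<longrightarrow>
        (\<exists>k'. tm k' + 1 = tm k \<and> b \<in> set (bcs (outp n t E k'))) \<or>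
        ({..<n} - C \<noteq> {} \<and>
         (case b of (m, sn, j, S) \<Rightarrow>
            \<forall>q \<in> S \<inter> C. \<exists>k'. tm k' + 2 \<le> tm k \<and> fst (E k') = q \<and>
                              (m, sn, j) \<in> set (sgs (outp n t E k'))))) \<and>
    (\<forall>k b. b \<in> set (bcs (outp n t E k)) \<longrightarrow>
        card {p \<in> C. \<not> (\<exists>k'. E k' = (p, Recv b) \<and> tm k' = tm k + 1)} \<le> d)"

end

theory Submission
  imports Defs
begin

text \<open>At time tm k0 + 1 at least c - d correct processes, the sender included, hold the
sender's initial bundle; each of them signs and relays a bundle carrying its own signature.
A correct process that has not delivered by time tm k0 + 2 has accepted at most
\<lfloor>(n + t)/2\<rfloor> of these relays, since every accepted relay adds a signature, so it
missed all the others; but each relay is missed by at most d correct processes. Double counting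
the missed pairs bounds the number of non-delivering correct processes.\<close>

lemma card_mult_le_double_counting:
  fixes R :: "'a \<Rightarrow> 'b \<Rightarrow> bool"
  assumes "finite A" and "finite B"
    and "\<And>b. b \<in> B \<Longrightarrow> card {a \<in> A. R a b} \<le> d"
    and "\<And>a. a \<in> A \<Longrightarrow> card {b \<in> B. \<not> R a b} \<le> K"
  shows "card A * (card B - K) \<le> d * card B"
proof -
  have count: "card {x \<in> X. P x} = (\<Sum>x\<in>X. if P x then 1 else 0)" if "finite X" for X and P :: "_ \<Rightarrow> bool"
    using that by (simp add: sum.If_cases Int_def)
  have "card B - K \<le> card {b \<in> B. R a b}" if "a \<in> A" for a
  proof -
    have "{b \<in> B. R a b} = B - {b \<in> B. \<not> R a b}" by blast
    then have "card {b \<in> B. R a b} = card B - card {b \<in> B. \<not> R a b}"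
      using card_Diff_subset[of "{b \<in> B. \<not> R a b}" B] assms(2) by simp
    then show ?thesis using assms(4)[OF that] by linarith
  qed
  then have "card A * (card B - K) \<le> (\<Sum>a\<in>A. card {b \<in> B. R a b})"
    using sum_mono[of A "\<lambda>_. card B - K"] by simp
  also have "\<dots> = (\<Sum>a\<in>A. \<Sum>b\<in>B. if R a b then 1 else 0)"
    using count[OF assms(2)] by simp
  also have "\<dots> = (\<Sum>b\<in>B. \<Sum>a\<in>A. if R a b then 1 else 0)"
    by (rule sum.swap)
  also have "\<dots> = (\<Sum>b\<in>B. card {a \<in> A. R a b})"
    using count[OF assms(1)] by simp
  also have "\<dots> \<le> d * card B"
    using sum_mono[of B "\<lambda>b. card {a \<in> A. R a b}" "\<lambda>_. d"] assms(3) by (simp add: mult.commute)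
  finally show ?thesis .
qed

lemma double_count_floor_bound:
  fixes N W c d K :: nat
  assumes "c - d \<le> W" and "W \<le> c" and "K < c - d" and "N * (W - K) \<le> d * W" and "N \<le> c"
  shows "int c - int d - \<lfloor>real d * real K / (real c - real d - real K)\<rfloor> \<le> int (c - N)"
proof -
  have pos: "real c - real d - real K > 0" using assms(3) by linarith
  have KW: "K < W" using assms(1,3) by linarith
  have "real N * (real W - real K) \<le> real d * real W"
    using assms(4) KW by (metis of_nat_diff of_nat_le_iff of_nat_mult less_imp_le)
  then have "(real N - real d) * (real c - real d - real K) \<le> real d * real K"
  proof (cases "d \<le> N")
    case True
    have "real c - real d - real K \<le> real W - real K" using assms(1,3) by linarith
    then have "(real N - real d) * (real c - real d - real K) \<le> (real N - real d) * (real W - real K)"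
      using True by (intro mult_left_mono) auto
    also have "\<dots> = real N * (real W - real K) - real d * real W + real d * real K"
      by (simp add: algebra_simps)
    finally show ?thesis using \<open>real N * (real W - real K) \<le> real d * real W\<close> by linarith
  next
    case False
    then have "(real N - real d) * (real c - real d - real K) \<le> 0"
      using pos by (intro mult_nonpos_nonneg) auto
    then show ?thesis by (simp add: order_trans)
  qed
  then have "real N - real d \<le> real d * real K / (real c - real d - real K)"
    using pos by (simp add: pos_le_divide_eq)
  then have "int N - int d \<le> \<lfloor>real d * real K / (real c - real d - real K)\<rfloor>"
    by (simp add: le_floor_iff)
  then show ?thesis using assms(5) by (simp add: of_nat_diff)
qed

lemma act_step_saved_mono:
  "act_step n t p a s = (s', out) \<Longrightarrow> saved s x \<subseteq> saved s' x"
  by (auto simp: act_step_def bcast_step_def recv_step_def Let_def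
           split: action.splits if_splits prod.splits)

lemma act_step_saved_bound:
  "act_step n t p a s = (s', out) \<Longrightarrow> saved s' x \<subseteq> saved s x \<union> {..<n} \<union> {p}"
  by (auto simp: act_step_def bcast_step_def recv_step_def Let_def
           split: action.splits if_splits prod.splits)

lemma act_step_signed_keys:
  "act_step n t p a s = (s', out) \<Longrightarrow> (sn, j) \<in> signed_keys s' \<Longrightarrow>
    (sn, j) \<in> signed_keys s \<or> (\<exists>m. a = MBcast m sn \<and> j = p) \<or> (\<exists>m S. a = Recv (m, sn, j, S) \<and> j \<in> S)"
  by (auto simp: act_step_def bcast_step_def recv_step_def Let_def
           split: action.splits if_splits prod.splits)

lemma act_step_dlv:
  "act_step n t p a s = (s', out) \<Longrightarrow> dlv s' \<subseteq> dlv s \<union> set (dls out)"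
  by (auto simp: act_step_def bcast_step_def recv_step_def Let_def no_out_def
           split: action.splits if_splits prod.splits)

lemma act_step_bcs:
  "act_step n t p a s = (s', out) \<Longrightarrow> (m, sn, j, S) \<in> set (bcs out) \<Longrightarrow>
    j \<in> S \<and> (a = MBcast m sn \<and> j = p \<or> (\<exists>S'. a = Recv (m, sn, j, S') \<and> j \<in> S'))"
  by (auto simp: act_step_def bcast_step_def recv_step_def Let_def no_out_def
           split: action.splits if_splits prod.splits)

lemma act_step_sgs:
  "act_step n t p a s = (s', out) \<Longrightarrow> (m, sn, j) \<in> set (sgs out) \<Longrightarrow>
    a = MBcast m sn \<and> j = p \<or> (\<exists>S. a = Recv (m, sn, j, S) \<and> j \<in> S)"
  by (auto simp: act_step_def bcast_step_def recv_step_def Let_def no_out_def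
           split: action.splits if_splits prod.splits)

lemma act_step_dls:
  "act_step n t p a s = (s', out) \<Longrightarrow> (m, sn, j) \<in> set (dls out) \<Longrightarrow>
    \<exists>S. a = Recv (m, sn, j, S) \<and> j \<in> S"
  by (auto simp: act_step_def bcast_step_def recv_step_def Let_def no_out_def
           split: action.splits if_splits prod.splits)

lemma recv_step_saves_signatures:
  assumes "\<nexists>m'. (m', sn, j) \<in> dlv s" and "j \<in> S" and "j < n"
    and "recv_step n t p (m, sn, j, S) s = (s', out)"
  shows "S \<inter> {..<n} \<subseteq> saved s' (m, sn, j)"
  using assms by (auto simp: recv_step_def Let_def split: if_splits)

lemma recv_step_first_signature:
  assumes "\<nexists>m'. (m', sn, j) \<in> dlv s" and "j \<in> S" and "j < n" and "(sn, j) \<notin> signed_keys s"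
    and "recv_step n t p (m, sn, j, S) s = (s', out)"
  shows "\<exists>S'. (m, sn, j, S') \<in> set (bcs out) \<and> p \<in> S'"
  using assms by (auto simp: recv_step_def Let_def split: if_splits)

lemma recv_step_quorum_delivers:
  assumes "\<nexists>m'. (m', sn, j) \<in> dlv s" and "j \<in> S" and "j < n"
    and "recv_step n t p (m, sn, j, S) s = (s', out)" and "(m, sn, j) \<notin> set (dls out)"
  shows "2 * card (saved s' (m, sn, j)) \<le> n + t"
  using assms by (auto simp: recv_step_def Let_def split: if_splits)

locale mbrb_execution =
  fixes n t d :: nat and C :: "nat set" and E :: "nat \<Rightarrow> nat \<times> 'm action" and tm :: "nat \<Rightarrow> nat"
  assumes correct_procs: "C \<subseteq> {..<n}" and valid: "valid_exec n t d C E tm"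
begin

abbreviation "st \<equiv> states n t E"
abbreviation "out \<equiv> outp n t E"

lemma finite_correct: "finite C"
  using finite_subset[OF correct_procs] by simp

lemma event_correct: "fst (E k) \<in> C"
  using valid unfolding valid_exec_def by blast

lemma tm_mono: "k \<le> k' \<Longrightarrow> tm k \<le> tm k'"
  using valid unfolding valid_exec_def mono_def by blast

lemma mbcast_sn_unique: "E k = (p, MBcast m sn) \<Longrightarrow> E k' = (p, MBcast m' sn) \<Longrightarrow> k = k'"
  using valid unfolding valid_exec_def by blast

lemma recv_source:
  "E k = (p, Recv (m, sn, j, S)) \<Longrightarrow>
    (\<exists>k'. tm k' + 1 = tm k \<and> (m, sn, j, S) \<in> set (bcs (out k'))) \<or>
    (\<forall>q \<in> S \<inter> C. \<exists>k'. tm k' + 2 \<le> tm k \<and> fst (E k') = q \<and> (m, sn, j) \<in> set (sgs (out k')))"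
proof -
  assume "E k = (p, Recv (m, sn, j, S))"
  then have "(\<exists>k'. tm k' + 1 = tm k \<and> (m, sn, j, S) \<in> set (bcs (out k'))) \<or>
    (case (m, sn, j, S) of (m, sn, j, S) \<Rightarrow>
       \<forall>q \<in> S \<inter> C. \<exists>k'. tm k' + 2 \<le> tm k \<and> fst (E k') = q \<and> (m, sn, j) \<in> set (sgs (out k')))"
    using valid unfolding valid_exec_def by blast
  then show ?thesis by simp
qed

lemma broadcast_missed_le:
  "b \<in> set (bcs (out k)) \<Longrightarrow> card {p \<in> C. \<nexists>k'. E k' = (p, Recv b) \<and> tm k' = tm k + 1} \<le> d"
  using valid unfolding valid_exec_def by blast

lemma event_step: "E k = (p, a) \<Longrightarrow> act_step n t p a (st k p) = (st (Suc k) p, out k)"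
  by (simp add: outp_def)

lemmas own_event_step = event_step[OF prod.collapse[symmetric]]

lemma states_other: "q \<noteq> fst (E k) \<Longrightarrow> st (Suc k) q = st k q"
  by (cases "E k") simp

lemma saved_bound: "saved (st k q) x \<subseteq> {..<n}"
proof (induction k)
  case 0 then show ?case by (simp add: init_st_def)
next
  case (Suc k)
  have "fst (E k) < n" using event_correct correct_procs by blast
  then show ?case
    using Suc act_step_saved_bound[OF own_event_step, of k x] states_other[of q k]
    by (cases "q = fst (E k)") auto
qed

lemma saved_mono: "k \<le> k' \<Longrightarrow> saved (st k q) x \<subseteq> saved (st k' q) x"
proof (induction k' rule: dec_induct)
  case (step k')
  then show ?case
    using act_step_saved_mono[OF own_event_step, of k' x] states_other[of q k']
    by (cases "q = fst (E k')") auto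
qed simp

lemma acquired_at_own_event:
  assumes "x \<notin> F init_st"
    and step: "\<And>k. x \<in> F (st (Suc k) (fst (E k))) \<Longrightarrow> x \<in> F (st k (fst (E k))) \<or> P k"
    and "x \<in> F (st k q)"
  shows "\<exists>k'<k. fst (E k') = q \<and> P k'"
  using assms(3)
proof (induction k)
  case 0 then show ?case using assms(1) by simp
next
  case (Suc k)
  show ?case
  proof (cases "q = fst (E k)")
    case True then show ?thesis using Suc step[of k] less_Suc_eq by blast
  next
    case False then show ?thesis using Suc states_other[of q k] less_Suc_eq by auto
  qed
qed

lemma bundle_origin:
  assumes "(m, sn, j, S) \<in> set (bcs (out k))"
  shows "j \<in> S \<and> (E k = (j, MBcast m sn) \<or> (\<exists>S'. snd (E k) = Recv (m, sn, j, S') \<and> j \<in> S'))"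
  using act_step_bcs[OF own_event_step assms] by (cases "E k") auto

lemma signature_origin:
  assumes "(m, sn, j) \<in> set (sgs (out k))"
  shows "E k = (j, MBcast m sn) \<or> (\<exists>S. snd (E k) = Recv (m, sn, j, S) \<and> j \<in> S)"
  using act_step_sgs[OF own_event_step assms] by (cases "E k") auto

lemma delivery_origin:
  assumes "(m, sn, j) \<in> set (dls (out k))"
  shows "\<exists>S. snd (E k) = Recv (m, sn, j, S) \<and> j \<in> S"
  using act_step_dls[OF own_event_step assms] .

lemma signed_keys_origin:
  assumes "(sn, j) \<in> signed_keys (st k q)"
  shows "\<exists>k'<k. fst (E k') = q \<and>
    ((\<exists>m. E k' = (j, MBcast m sn)) \<or> (\<exists>m S. snd (E k') = Recv (m, sn, j, S) \<and> j \<in> S))"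
proof (rule acquired_at_own_event[where F = signed_keys, OF _ _ assms])
  fix k assume "(sn, j) \<in> signed_keys (st (Suc k) (fst (E k)))"
  from act_step_signed_keys[OF own_event_step this]
  show "(sn, j) \<in> signed_keys (st k (fst (E k))) \<or> (\<exists>m. E k = (j, MBcast m sn)) \<or>
      (\<exists>m S. snd (E k) = Recv (m, sn, j, S) \<and> j \<in> S)"
    by (cases "E k") auto
qed (simp add: init_st_def)

lemma dlv_origin:
  assumes "x \<in> dlv (st k q)"
  shows "\<exists>k'<k. fst (E k') = q \<and> x \<in> set (dls (out k'))"
  by (rule acquired_at_own_event[where F = dlv, OF _ _ assms])
     (use act_step_dlv[OF own_event_step] in \<open>auto simp: init_st_def\<close>)

end

locale mbrb_broadcast = mbrb_execution n t d C E tm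
  for n t d C and E :: "nat \<Rightarrow> nat \<times> 'm action" and tm +
  fixes k0 i sn :: nat and m :: 'm
  assumes bcast_event: "E k0 = (i, MBcast m sn)"
begin

lemma sender_correct: "i \<in> C"
  using event_correct[of k0] bcast_event by simp

lemma sender_lt: "i < n"
  using sender_correct correct_procs by blast

lemma sender_mbcast_unique: "E k = (i, MBcast m' sn) \<Longrightarrow> k = k0 \<and> m' = m"
  using mbcast_sn_unique[of k i m' sn k0 m] bcast_event by simp

text \<open>A bundle carrying i's signature on (m', sn, i) was either relayed one step earlier by an
event that itself held that signature, or forged from a signature produced two steps earlier;
strong induction on time traces it back to the broadcast k0.\<close>

lemma signed_recv_after_bcast:
  assumes "E k = (q, Recv (m', sn, i, S))" and "i \<in> S"
  shows "m' = m \<and> tm k0 < tm k"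
  using assms
proof (induction "tm k" arbitrary: k q m' S rule: less_induct)
  case less
  have earlier: "m' = m \<and> tm k0 \<le> tm k'"
    if "tm k' < tm k" and "E k' = (i, MBcast m' sn) \<or> (\<exists>S'. snd (E k') = Recv (m', sn, i, S') \<and> i \<in> S')"
    for k'
    using that sender_mbcast_unique less.hyps[of k' "fst (E k')" m'] by (cases "E k'") fastforce+
  from recv_source[OF less.prems(1)] show ?case
  proof
    assume "\<exists>k'. tm k' + 1 = tm k \<and> (m', sn, i, S) \<in> set (bcs (out k'))"
    then obtain k' where k': "tm k' + 1 = tm k" "(m', sn, i, S) \<in> set (bcs (out k'))" by blast
    with earlier[of k'] bundle_origin[OF k'(2)] show ?thesis by auto
  next
    assume "\<forall>q \<in> S \<inter> C. \<exists>k'. tm k' + 2 \<le> tm k \<and> fst (E k') = q \<and> (m', sn, i) \<in> set (sgs (out k'))"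
    then obtain k' where k': "tm k' + 2 \<le> tm k" "(m', sn, i) \<in> set (sgs (out k'))"
      using less.prems(2) sender_correct by blast
    with earlier[of k'] signature_origin[OF k'(2)] show ?thesis by auto
  qed
qed

lemma no_signed_recv_until_bcast:
  assumes "tm k \<le> tm k0"
  shows "\<nexists>S. snd (E k) = Recv (m', sn, i, S) \<and> i \<in> S"
  using assms signed_recv_after_bcast[of k "fst (E k)" m'] by (cases "E k") auto

definition initial_bundle :: "'m bndl" where
  "initial_bundle = (m, sn, i, insert i (saved (st k0 i) (m, sn, i)))"

lemma bcs_bcast_event: "bcs (out k0) = [initial_bundle]"
  using bcast_event by (simp add: outp_def act_step_def bcast_step_def initial_bundle_def Let_def)

lemma signed_recv_first_step:
  assumes recv: "E k = (q, Recv (m', sn, i, S))" and "i \<in> S" and "tm k = Suc (tm k0)"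
  shows "(m', sn, i, S) = initial_bundle"
  using recv_source[OF recv]
proof
  assume "\<exists>k'. tm k' + 1 = tm k \<and> (m', sn, i, S) \<in> set (bcs (out k'))"
  then obtain k' where k': "tm k' = tm k0" "(m', sn, i, S) \<in> set (bcs (out k'))"
    using assms(3) by auto
  then have "E k' = (i, MBcast m' sn)"
    using bundle_origin[OF k'(2)] no_signed_recv_until_bcast[of k' m'] by auto
  then have "k' = k0" using sender_mbcast_unique by blast
  then show ?thesis using k'(2) bcs_bcast_event by simp
next
  assume "\<forall>q \<in> S \<inter> C. \<exists>k'. tm k' + 2 \<le> tm k \<and> fst (E k') = q \<and> (m', sn, i) \<in> set (sgs (out k'))"
  then obtain k' where k': "tm k' + 2 \<le> tm k" "(m', sn, i) \<in> set (sgs (out k'))"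
    using assms(2) sender_correct by blast
  then have "tm k' < tm k0" using assms(3) by linarith
  moreover from this have "E k' = (i, MBcast m' sn)"
    using signature_origin[OF k'(2)] no_signed_recv_until_bcast[of k' m'] by auto
  ultimately show ?thesis using sender_mbcast_unique by blast
qed

definition first_wave :: "nat set" where
  "first_wave = insert i {p \<in> C. \<exists>k. E k = (p, Recv initial_bundle) \<and> tm k = Suc (tm k0)}"

lemma first_wave_subset: "first_wave \<subseteq> C"
  using sender_correct by (auto simp: first_wave_def)

lemma card_first_wave: "card C - d \<le> card first_wave"
proof -
  have "C - first_wave \<subseteq> {p \<in> C. \<nexists>k. E k = (p, Recv initial_bundle) \<and> tm k = tm k0 + 1}"
    by (auto simp: first_wave_def)
  then have "card (C - first_wave) \<le> card {p \<in> C. \<nexists>k. E k = (p, Recv initial_bundle) \<and> tm k = tm k0 + 1}"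
    by (rule card_mono[rotated]) (use finite_correct in simp)
  also have "\<dots> \<le> d"
    using broadcast_missed_le[of initial_bundle k0] bcs_bcast_event by simp
  finally have "card (C - first_wave) \<le> d" .
  moreover have "card (C - first_wave) = card C - card first_wave"
    using card_Diff_subset[OF finite_subset[OF first_wave_subset finite_correct] first_wave_subset] .
  ultimately show ?thesis by linarith
qed

lemma first_wave_signs:
  assumes "w \<in> first_wave"
  shows "\<exists>k S. tm k \<le> Suc (tm k0) \<and> (m, sn, i, S) \<in> set (bcs (out k)) \<and> w \<in> S"
proof (cases "w = i")
  case True
  then show ?thesis using bcs_bcast_event by (auto simp: initial_bundle_def intro!: exI[of _ k0])
next
  case False
  let ?P = "\<lambda>k. E k = (w, Recv initial_bundle) \<and> tm k = Suc (tm k0)"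
  from assms False obtain k1 where first: "?P k1" and least: "\<forall>k<k1. \<not> ?P k"
    using exists_least_iff[of ?P] by (auto simp: first_wave_def)
  \<comment> \<open>An earlier signed bundle received by w would arrive at time tm k0 + 1 and hence be the
      initial bundle, contradicting minimality; so w has neither signed nor delivered for (sn, i).\<close>
  have untouched: "\<nexists>m' S. snd (E k) = Recv (m', sn, i, S) \<and> i \<in> S"
    if before: "k < k1" and own: "fst (E k) = w" for k
  proof
    assume "\<exists>m' S. snd (E k) = Recv (m', sn, i, S) \<and> i \<in> S"
    then obtain m' S where recv: "E k = (w, Recv (m', sn, i, S))" "i \<in> S"
      using own by (cases "E k") auto
    have "tm k \<le> tm k1" using tm_mono before by simp
    then have "tm k = Suc (tm k0)" using signed_recv_after_bcast[OF recv] first by simp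
    with signed_recv_first_step[OF recv this] recv have "?P k" by simp
    with least before show False by blast
  qed
  have undelivered: "\<nexists>m'. (m', sn, i) \<in> dlv (st k1 w)"
    using dlv_origin delivery_origin untouched by blast
  have unsigned: "(sn, i) \<notin> signed_keys (st k1 w)"
    using signed_keys_origin[of sn i k1 w] untouched False by force
  have recv: "recv_step n t w initial_bundle (st k1 w) = (st (Suc k1) w, out k1)"
    using event_step[of k1 w "Recv initial_bundle"] first by (simp add: act_step_def)
  have "\<exists>S'. (m, sn, i, S') \<in> set (bcs (out k1)) \<and> w \<in> S'"
    using recv_step_first_signature[OF undelivered _ sender_lt unsigned recv[unfolded initial_bundle_def]]
    by simp
  then show ?thesis using first by (intro exI[of _ k1]) simp
qed

definition delivered_early :: "nat set" where
  "delivered_early =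
     {p \<in> C. \<exists>k. fst (E k) = p \<and> tm k \<le> tm k0 + 2 \<and> (m, sn, i) \<in> set (dls (out k))}"

lemma undelivered_recv:
  assumes recv: "E k = (q, Recv (m, sn, i, S))" and "i \<in> S" and "tm k \<le> tm k0 + 2"
    and "q \<notin> delivered_early"
  shows "S \<inter> {..<n} \<subseteq> saved (st (Suc k) q) (m, sn, i)"
    and "2 * card (saved (st (Suc k) q) (m, sn, i)) \<le> n + t"
proof -
  have q: "q \<in> C" using event_correct[of k] recv by simp
  have undelivered: "\<nexists>m'. (m', sn, i) \<in> dlv (st k q)"
  proof
    assume "\<exists>m'. (m', sn, i) \<in> dlv (st k q)"
    then obtain m' k' where k': "k' < k" "fst (E k') = q" "(m', sn, i) \<in> set (dls (out k'))"
      using dlv_origin by blast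
    obtain S' where "E k' = (q, Recv (m', sn, i, S'))" "i \<in> S'"
      using delivery_origin[OF k'(3)] k'(2) by (cases "E k'") auto
    then have "m' = m" using signed_recv_after_bcast by blast
    moreover have "tm k' \<le> tm k" using tm_mono k'(1) by simp
    ultimately show False
      using k' q assms(3,4) unfolding delivered_early_def by auto
  qed
  have step: "recv_step n t q (m, sn, i, S) (st k q) = (st (Suc k) q, out k)"
    using event_step[OF recv] by (simp add: act_step_def)
  have "(m, sn, i) \<notin> set (dls (out k))"
    using recv q assms(3,4) unfolding delivered_early_def by auto
  then show "2 * card (saved (st (Suc k) q) (m, sn, i)) \<le> n + t"
    by (rule recv_step_quorum_delivers[OF undelivered \<open>i \<in> S\<close> sender_lt step])
  show "S \<inter> {..<n} \<subseteq> saved (st (Suc k) q) (m, sn, i)"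
    by (rule recv_step_saves_signatures[OF undelivered \<open>i \<in> S\<close> sender_lt step])
qed

lemma undelivered_sees_few_signers:
  assumes "q \<notin> delivered_early" and "G \<subseteq> {..<n}"
    and signers: "\<forall>w \<in> G. \<exists>k S. E k = (q, Recv (m, sn, i, S)) \<and> tm k \<le> tm k0 + 2 \<and> i \<in> S \<and> w \<in> S"
  shows "card G \<le> (n + t) div 2"
proof (cases "G = {}")
  case False
  from bchoice[OF signers] obtain r where
    r: "\<forall>w \<in> G. \<exists>S. E (r w) = (q, Recv (m, sn, i, S)) \<and> tm (r w) \<le> tm k0 + 2 \<and> i \<in> S \<and> w \<in> S"
    by blast
  have fin: "finite G" using finite_subset[OF assms(2)] by simp
  define kl where "kl = Max (r ` G)"
  have "G \<subseteq> saved (st (Suc kl) q) (m, sn, i)"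
  proof
    fix w assume w: "w \<in> G"
    then obtain S where S: "E (r w) = (q, Recv (m, sn, i, S))" "tm (r w) \<le> tm k0 + 2" "i \<in> S" "w \<in> S"
      using r by blast
    have "w \<in> saved (st (Suc (r w)) q) (m, sn, i)"
      using undelivered_recv(1)[OF S(1,3,2) assms(1)] S(4) w assms(2) by blast
    moreover have "r w \<le> kl" unfolding kl_def using fin w by simp
    ultimately show "w \<in> saved (st (Suc kl) q) (m, sn, i)"
      using saved_mono[of "Suc (r w)" "Suc kl"] by blast
  qed
  then have "card G \<le> card (saved (st (Suc kl) q) (m, sn, i))"
    by (rule card_mono[OF finite_subset[OF saved_bound finite_lessThan]])
  moreover have "2 * card (saved (st (Suc kl) q) (m, sn, i)) \<le> n + t"
  proof -
    have "kl \<in> r ` G" unfolding kl_def using fin False by simp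
    then obtain w where "w \<in> G" "kl = r w" by blast
    moreover from this obtain S where "E (r w) = (q, Recv (m, sn, i, S))" "tm (r w) \<le> tm k0 + 2" "i \<in> S"
      using r by blast
    ultimately show ?thesis using undelivered_recv(2)[OF _ _ _ assms(1)] by simp
  qed
  ultimately show ?thesis by linarith
qed simp

lemma undelivered_count:
  "card (C - delivered_early) * (card first_wave - (n + t) div 2) \<le> d * card first_wave"
proof -
  obtain kf Sf where relay: "\<forall>w \<in> first_wave.
      tm (kf w) \<le> Suc (tm k0) \<and> (m, sn, i, Sf w) \<in> set (bcs (out (kf w))) \<and> w \<in> Sf w"
    using first_wave_signs by metis
  define missed where
    "missed q w \<longleftrightarrow> (\<nexists>k. E k = (q, Recv (m, sn, i, Sf w)) \<and> tm k = tm (kf w) + 1)" for q w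
  show ?thesis
  proof (rule card_mult_le_double_counting[where R = missed])
    show "finite (C - delivered_early)" using finite_correct by simp
    show "finite first_wave" using finite_subset[OF first_wave_subset finite_correct] .
  next
    fix w assume "w \<in> first_wave"
    have "card {q \<in> C - delivered_early. missed q w}
        \<le> card {q \<in> C. \<nexists>k. E k = (q, Recv (m, sn, i, Sf w)) \<and> tm k = tm (kf w) + 1}"
      by (rule card_mono) (auto simp: missed_def finite_correct)
    also have "\<dots> \<le> d"
      using broadcast_missed_le relay \<open>w \<in> first_wave\<close> by blast
    finally show "card {q \<in> C - delivered_early. missed q w} \<le> d" .
  next
    fix q assume q: "q \<in> C - delivered_early"
    show "card {w \<in> first_wave. \<not> missed q w} \<le> (n + t) div 2"
    proof (rule undelivered_sees_few_signers)
      show "q \<notin> delivered_early" using q by simp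
      show "{w \<in> first_wave. \<not> missed q w} \<subseteq> {..<n}"
        using first_wave_subset correct_procs by auto
      show "\<forall>w \<in> {w \<in> first_wave. \<not> missed q w}. \<exists>k S. E k = (q, Recv (m, sn, i, S)) \<and>
          tm k \<le> tm k0 + 2 \<and> i \<in> S \<and> w \<in> S"
      proof
        fix w assume w: "w \<in> {w \<in> first_wave. \<not> missed q w}"
        then obtain k where "E k = (q, Recv (m, sn, i, Sf w))" "tm k = tm (kf w) + 1"
          unfolding missed_def by blast
        moreover have "i \<in> Sf w" using relay w bundle_origin by blast
        ultimately show "\<exists>k S. E k = (q, Recv (m, sn, i, S)) \<and> tm k \<le> tm k0 + 2 \<and> i \<in> S \<and> w \<in> S"
          using relay w by (intro exI[of _ k] exI[of _ "Sf w"]) auto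
      qed
    qed
  qed
qed

end

theorem mainTheorem8:
  fixes n t d :: nat and C :: "nat set" and E :: "nat \<Rightarrow> nat \<times> 'm action"
    and tm :: "nat \<Rightarrow> nat" and k0 i sn :: nat and m :: 'm
  assumes "C \<subseteq> {..<n}" and "n - t \<le> card C" and "d < card C"
    and "3 * t + 2 * d < n"
    and "valid_exec n t d C E tm"
    and "E k0 = (i, MBcast m sn)"
  shows "int (card {p \<in> C. \<exists>k. fst (E k) = p \<and> tm k \<le> tm k0 + 2 \<and>
                              (m, sn, i) \<in> set (dls (outp n t E k))})
         \<ge> int (card C) - int d
            - \<lfloor>real d * real ((n + t) div 2) /
                 (real (card C) - real d - real ((n + t) div 2))\<rfloor>"
proof -
  interpret mbrb_broadcast n t d C E tm k0 i sn m
    using assms by unfold_locales auto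
  have "{p \<in> C. \<exists>k. fst (E k) = p \<and> tm k \<le> tm k0 + 2 \<and> (m, sn, i) \<in> set (dls (outp n t E k))}
      = delivered_early"
    unfolding delivered_early_def ..
  moreover have "card delivered_early = card C - card (C - delivered_early)"
  proof -
    have sub: "delivered_early \<subseteq> C" unfolding delivered_early_def by blast
    show ?thesis
      using card_Diff_subset[OF finite_subset[OF sub finite_correct] sub] card_mono[OF finite_correct sub]
      by simp
  qed
  moreover have "(n + t) div 2 < card C - d" using assms(2,4) by linarith
  ultimately show ?thesis
    using double_count_floor_bound[OF card_first_wave card_mono[OF finite_correct first_wave_subset]
        _ undelivered_count card_mono[OF finite_correct Diff_subset]]
    by simp
qed

end
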